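(* For every $N\ge 2$, $\mathbb{E}[\mathcal{N}_1(N)]=N/2$, and for every $N\ge 3$, $$\mathbb{E}[\mathcal{N}_1(N)^2]=\frac{N(3N+1)}{12},\qquad \operatorname{Var}[\mathcal{N}_1(N)]=\frac{N}{12}.$$
   Context: A random recursive hypergraph (RRH) is the random hypergraph process defined as follows. At size $N=1$ it has vertex set $\{v_1\}$ and edge set $\{\{v_1\}\}$. Given the hypergraph of size $N$ (vertices $v_1,\dots,v_N$, exactly $N$ edges), one chooses an existing edge $e$ uniformly at random, independently of the past, and adds a new vertex $v_{N+1}$ together with the new edge $e\cup\{v_{N+1}\}$. The degree of a vertex is the number of edges containing it. $\mathcal{N}_k(N)$ denotes the number of vertices of degree $k$ in the RRH of size $N$. *)

theory Defs
  imports "HOL-Probability.Probability"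
begin

text \<open>A hypergraph of size N is represented by its list of N edges; its vertices are
  0, ..., N-1 (vertex v_(i+1) of the paper is the natural number i).
  Edges are sets of vertices; the edge list is ordered by creation time.\<close>

type_synonym hgraph = "nat set list"

definition rrh_step :: "hgraph \<Rightarrow> hgraph pmf" where
  "rrh_step H = map_pmf (\<lambda>i. H @ [insert (length H) (H ! i)]) (pmf_of_set {..<length H})"

text \<open>The random recursive hypergraph of size N (size 0 is a dummy value).\<close>
fun rrh :: "nat \<Rightarrow> hgraph pmf" where
  "rrh 0 = return_pmf []"
| "rrh (Suc 0) = return_pmf [{0}]"
| "rrh (Suc (Suc n)) = bind_pmf (rrh (Suc n)) rrh_step"

definition degree :: "hgraph \<Rightarrow> nat \<Rightarrow> nat" where
  "degree H v = card {i. i < length H \<and> v \<in> H ! i}"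

definition numdeg :: "nat \<Rightarrow> hgraph \<Rightarrow> nat" where
  "numdeg k H = card {v. v < length H \<and> degree H v = k}"

end

theory Submission imports Defs begin

text \<open>At each step the new vertex is a leaf and every vertex of the chosen edge gains one
  degree. Among the vertices of the edge created together with vertex \<open>i\<close>, only \<open>i\<close> itself can
  be a leaf: any other vertex \<open>v\<close> of it satisfies \<open>v < i\<close> and also lies in its own edge.
  Hence \<open>\<N>\<^sub>1\<close> grows by one, except when the chosen edge belongs to a leaf, which
  happens with probability \<open>\<N>\<^sub>1(N)/N\<close>. This yields linear recursions for the first two
  moments of \<open>\<N>\<^sub>1\<close>, which are solved explicitly.\<close>

definition attach :: "hgraph \<Rightarrow> nat \<Rightarrow> hgraph" where
  "attach H i = H @ [insert (length H) (H ! i)]"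

definition recursive_hgraph :: "hgraph \<Rightarrow> bool" where
  "recursive_hgraph H \<longleftrightarrow> H \<noteq> [] \<and> (\<forall>i<length H. i \<in> H ! i \<and> H ! i \<subseteq> {..i})"

lemma rrh_step_eq_map_attach: "rrh_step H = map_pmf (attach H) (pmf_of_set {..<length H})"
  unfolding rrh_step_def attach_def ..

lemma set_rrh_step:
  "H \<noteq> [] \<Longrightarrow> set_pmf (rrh_step H) = attach H ` {..<length H}"
  by (simp add: rrh_step_eq_map_attach set_pmf_of_set lessThan_empty_iff)

lemma recursive_hgraph_mem_own_edge:
  "recursive_hgraph H \<Longrightarrow> i < length H \<Longrightarrow> i \<in> H ! i"
  by (simp add: recursive_hgraph_def)

lemma recursive_hgraph_edge_le:
  "recursive_hgraph H \<Longrightarrow> i < length H \<Longrightarrow> v \<in> H ! i \<Longrightarrow> v \<le> i"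
  by (auto simp: recursive_hgraph_def)

lemma recursive_hgraph_attach:
  assumes "recursive_hgraph H" "i < length H"
  shows "recursive_hgraph (attach H i)"
  using assms recursive_hgraph_edge_le[OF assms]
  by (fastforce simp: recursive_hgraph_def attach_def nth_append less_Suc_eq)

lemma rrh_recursive_hgraph:
  "H \<in> set_pmf (rrh (Suc n)) \<Longrightarrow> recursive_hgraph H \<and> length H = Suc n"
proof (induction n arbitrary: H)
  case 0
  then show ?case by (auto simp: recursive_hgraph_def)
next
  case (Suc n)
  then obtain G where G: "G \<in> set_pmf (rrh (Suc n))" "H \<in> set_pmf (rrh_step G)"
    by auto
  with Suc.IH have "recursive_hgraph G" and len: "length G = Suc n" by auto
  then have "G \<noteq> []" by auto
  with G(2) obtain i where "i < length G" "H = attach G i"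
    by (auto simp: set_rrh_step)
  moreover have "length (attach G i) = Suc (length G)" by (simp add: attach_def)
  ultimately show ?case
    using recursive_hgraph_attach[OF \<open>recursive_hgraph G\<close>] len by simp
qed

lemma finite_set_rrh_step: "H \<noteq> [] \<Longrightarrow> finite (set_pmf (rrh_step H))"
  by (simp add: set_rrh_step)

lemma finite_set_rrh_step_rrh:
  "H \<in> set_pmf (rrh (Suc n)) \<Longrightarrow> finite (set_pmf (rrh_step H))"
  using rrh_recursive_hgraph by (force intro: finite_set_rrh_step)

lemma finite_set_rrh: "finite (set_pmf (rrh (Suc n)))"
  by (induction n) (auto simp: finite_set_rrh_step_rrh)

lemma degree_attach_old:
  assumes "v < length H"
  shows "degree (attach H i) v = degree H v + of_bool (v \<in> H ! i)"
proof -
  have "{j. j < length (attach H i) \<and> v \<in> attach H i ! j}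
      = {j. j < length H \<and> v \<in> H ! j} \<union> (if v \<in> H ! i then {length H} else {})"
    using assms by (auto simp: attach_def nth_append less_Suc_eq)
  then show ?thesis by (simp add: degree_def card_insert_if)
qed

lemma degree_attach_new:
  assumes "recursive_hgraph H"
  shows "degree (attach H i) (length H) = 1"
proof -
  have "length H \<notin> H ! j" if "j < length H" for j
    using assms that by (force simp: recursive_hgraph_def)
  then have "{j. j < length (attach H i) \<and> length H \<in> attach H i ! j} = {length H}"
    by (auto simp: attach_def nth_append less_Suc_eq)
  then show ?thesis by (simp add: degree_def)
qed

lemma degree_pos:
  assumes "recursive_hgraph H" "v < length H"
  shows "degree H v > 0"
proof -
  have "v \<in> {j. j < length H \<and> v \<in> H ! j}"
    using assms recursive_hgraph_mem_own_edge by blast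
  then show ?thesis unfolding degree_def by (auto simp: card_gt_0_iff)
qed

lemma leaf_in_edge_iff:
  assumes "recursive_hgraph H" "i < length H" "v \<in> H ! i"
  shows "degree H v = 1 \<longleftrightarrow> v = i \<and> degree H i = 1"
proof (cases "v = i")
  case False
  with recursive_hgraph_edge_le[OF assms] have "v < i" by simp
  with assms have "{v, i} \<subseteq> {j. j < length H \<and> v \<in> H ! j}"
    using recursive_hgraph_mem_own_edge by auto
  from card_mono[OF _ this] have "degree H v \<ge> 2"
    using False by (simp add: degree_def)
  with False show ?thesis by simp
qed simp

lemma leaves_attach:
  assumes "recursive_hgraph H" "i < length H"
  shows "{v. v < length (attach H i) \<and> degree (attach H i) v = 1}
       = insert (length H) ({v. v < length H \<and> degree H v = 1} - {v. v = i \<and> degree H i = 1})"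
proof -
  have "degree (attach H i) v = 1 \<longleftrightarrow> degree H v = 1 \<and> \<not> (v = i \<and> degree H i = 1)"
    if "v < length H" for v
  proof (cases "v \<in> H ! i")
    case True
    with degree_attach_old[OF that, of i] degree_pos[OF assms(1) that]
      leaf_in_edge_iff[OF assms True]
    show ?thesis by auto
  next
    case False
    with degree_attach_old[OF that, of i] recursive_hgraph_mem_own_edge[OF assms]
    show ?thesis by auto
  qed
  moreover have "length (attach H i) = Suc (length H)" by (simp add: attach_def)
  ultimately show ?thesis
    using degree_attach_new[OF assms(1), of i] by (auto simp: less_Suc_eq)
qed

lemma numdeg_1_attach:
  assumes "recursive_hgraph H" "i < length H"
  shows "real (numdeg 1 (attach H i)) = real (numdeg 1 H) + 1 - of_bool (degree H i = 1)"
proof (cases "degree H i = 1")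
  case True
  then have "i \<in> {v. v < length H \<and> degree H v = 1}" using assms(2) by simp
  moreover from this have "card {v. v < length H \<and> degree H v = 1} > 0"
    by (auto simp: card_gt_0_iff)
  moreover have "{v. v = i \<and> degree H i = 1} = {i}" using True by auto
  ultimately show ?thesis
    unfolding numdeg_def leaves_attach[OF assms]
    by (simp add: card_Diff_singleton of_nat_diff Suc_le_eq)
next
  case False
  then show ?thesis unfolding numdeg_def leaves_attach[OF assms] by simp
qed

lemma expectation_bind_pmf_finite:
  fixes h :: "'b \<Rightarrow> real"
  assumes "finite (set_pmf p)" "\<And>x. x \<in> set_pmf p \<Longrightarrow> finite (set_pmf (f x))"
  shows "measure_pmf.expectation (p \<bind> f) h
       = measure_pmf.expectation p (\<lambda>x. measure_pmf.expectation (f x) h)"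
  using assms
  by (simp add: pmf_expectation_bind[OF assms(1) assms(2) order_refl]
      integral_measure_pmf[OF assms(1)])

lemma expectation_rrh_Suc_Suc:
  fixes h :: "hgraph \<Rightarrow> real"
  shows "measure_pmf.expectation (rrh (Suc (Suc n))) h
       = measure_pmf.expectation (rrh (Suc n)) (\<lambda>H. measure_pmf.expectation (rrh_step H) h)"
  unfolding rrh.simps
  by (intro expectation_bind_pmf_finite finite_set_rrh finite_set_rrh_step_rrh)

text \<open>A step moves \<open>\<N>\<^sub>1 = x\<close> to \<open>x + 1\<close>, or leaves it at \<open>x\<close> with probability \<open>x / N\<close>.\<close>

lemma expectation_rrh_step_numdeg_1:
  fixes g :: "real \<Rightarrow> real"
  assumes "recursive_hgraph H"
  defines "x \<equiv> real (numdeg 1 H)"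
  shows "measure_pmf.expectation (rrh_step H) (\<lambda>G. g (real (numdeg 1 G)))
       = g (x + 1) - (g (x + 1) - g x) * x / real (length H)"
proof -
  have "H \<noteq> []" using assms by (simp add: recursive_hgraph_def)
  have "(\<Sum>i<length H. g (real (numdeg 1 (attach H i))))
      = (\<Sum>i<length H. g (x + 1) - (g (x + 1) - g x) * of_bool (degree H i = 1))"
  proof (intro sum.cong refl)
    fix i assume "i \<in> {..<length H}"
    with numdeg_1_attach[OF assms(1), of i]
    show "g (real (numdeg 1 (attach H i))) = g (x + 1) - (g (x + 1) - g x) * of_bool (degree H i = 1)"
      by (auto simp: x_def)
  qed
  also have "\<dots> = real (length H) * g (x + 1) - (g (x + 1) - g x) * x"
    by (simp add: sum_subtractf sum_distrib_left[symmetric] x_def numdeg_def Int_def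
        conj_commute)
  finally show ?thesis
    using \<open>H \<noteq> []\<close>
    by (simp add: rrh_step_eq_map_attach integral_pmf_of_set lessThan_empty_iff field_simps)
qed

lemma expectation_rrh_Suc_Suc_numdeg_1:
  fixes g :: "real \<Rightarrow> real"
  shows "measure_pmf.expectation (rrh (Suc (Suc n))) (\<lambda>H. g (real (numdeg 1 H)))
       = measure_pmf.expectation (rrh (Suc n))
           (\<lambda>H. g (real (numdeg 1 H) + 1)
              - (g (real (numdeg 1 H) + 1) - g (real (numdeg 1 H))) * real (numdeg 1 H) / real (Suc n))"
  unfolding expectation_rrh_Suc_Suc
proof (intro integral_cong_AE)
  show "AE H in rrh (Suc n). measure_pmf.expectation (rrh_step H) (\<lambda>G. g (real (numdeg 1 G)))
      = g (real (numdeg 1 H) + 1)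
        - (g (real (numdeg 1 H) + 1) - g (real (numdeg 1 H))) * real (numdeg 1 H) / real (Suc n)"
    using expectation_rrh_step_numdeg_1 rrh_recursive_hgraph by (auto simp: AE_measure_pmf_iff)
qed simp_all

lemma integrable_rrh [simp]: "integrable (measure_pmf (rrh (Suc n))) (f :: hgraph \<Rightarrow> real)"
  by (rule integrable_measure_pmf_finite[OF finite_set_rrh])

definition leaf_moment :: "nat \<Rightarrow> nat \<Rightarrow> real" where
  "leaf_moment k N = measure_pmf.expectation (rrh N) (\<lambda>H. real (numdeg 1 H) ^ k)"

lemma leaf_moment_Suc_0: "leaf_moment k (Suc 0) = 1"
proof -
  have "{i. i < 1 \<and> 0 \<in> [{0::nat}] ! i} = {0}" by auto
  then have "degree [{0}] 0 = 1" by (simp add: degree_def)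
  then have "{v. v < 1 \<and> degree [{0}] v = 1} = {0}" by auto
  then show ?thesis by (simp add: leaf_moment_def numdeg_def)
qed

lemma leaf_moment_1_Suc_Suc:
  "leaf_moment 1 (Suc (Suc n)) = leaf_moment 1 (Suc n) + 1 - leaf_moment 1 (Suc n) / real (Suc n)"
  using expectation_rrh_Suc_Suc_numdeg_1[where g = "\<lambda>x. x"]
  by (simp add: leaf_moment_def)

lemma leaf_moment_2_Suc_Suc:
  "leaf_moment 2 (Suc (Suc n)) = leaf_moment 2 (Suc n) + 2 * leaf_moment 1 (Suc n) + 1
     - (2 * leaf_moment 2 (Suc n) + leaf_moment 1 (Suc n)) / real (Suc n)"
  using expectation_rrh_Suc_Suc_numdeg_1[where g = "\<lambda>x. x\<^sup>2"]
  by (simp add: leaf_moment_def power2_eq_square algebra_simps add_divide_distrib diff_divide_distrib)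

lemma leaf_moment_1: "N \<ge> 2 \<Longrightarrow> leaf_moment 1 N = real N / 2"
proof (induction N rule: nat_induct_at_least)
  case base
  show ?case using leaf_moment_1_Suc_Suc[of 0] by (simp add: leaf_moment_Suc_0 numeral_2_eq_2)
next
  case (Suc N)
  then obtain n where N: "N = Suc n" by (cases N) auto
  have "leaf_moment 1 (Suc N) = leaf_moment 1 N + 1 - leaf_moment 1 N / real N"
    unfolding N by (rule leaf_moment_1_Suc_Suc)
  also have "\<dots> = real (Suc N) / 2"
    using Suc N by (simp add: field_simps)
  finally show ?case .
qed

lemma leaf_moment_2: "N \<ge> 3 \<Longrightarrow> leaf_moment 2 N = real N * (3 * real N + 1) / 12"
proof (induction N rule: nat_induct_at_least)
  case base
  have "leaf_moment 2 2 = 1"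
    using leaf_moment_2_Suc_Suc[of 0] by (simp add: leaf_moment_Suc_0 numeral_2_eq_2)
  then show ?case
    using leaf_moment_2_Suc_Suc[of 1] leaf_moment_1[of 2] by (simp add: numeral_3_eq_3 numeral_2_eq_2)
next
  case (Suc N)
  then obtain n where N: "N = Suc n" by (cases N) auto
  have "leaf_moment 2 (Suc N) = leaf_moment 2 N + 2 * leaf_moment 1 N + 1
     - (2 * leaf_moment 2 N + leaf_moment 1 N) / real N"
    unfolding N by (rule leaf_moment_2_Suc_Suc)
  also have "\<dots> = real (Suc N) * (3 * real (Suc N) + 1) / 12"
    using Suc N leaf_moment_1[of N] by (simp add: field_simps)
  finally show ?case .
qed

theorem mainTheorem2:
  shows "(\<forall>N::nat. N \<ge> 2 \<longrightarrow>
            measure_pmf.expectation (rrh N) (\<lambda>H. real (numdeg 1 H)) = real N / 2)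
       \<and> (\<forall>N::nat. N \<ge> 3 \<longrightarrow>
            measure_pmf.expectation (rrh N) (\<lambda>H. (real (numdeg 1 H))^2)
              = real N * (3 * real N + 1) / 12
          \<and> measure_pmf.variance (rrh N) (\<lambda>H. real (numdeg 1 H)) = real N / 12)"
proof (intro conjI allI impI)
  fix N :: nat
  assume "N \<ge> 2"
  then show "measure_pmf.expectation (rrh N) (\<lambda>H. real (numdeg 1 H)) = real N / 2"
    using leaf_moment_1 by (simp add: leaf_moment_def)
next
  fix N :: nat
  assume "N \<ge> 3"
  then show "measure_pmf.expectation (rrh N) (\<lambda>H. (real (numdeg 1 H))^2)
      = real N * (3 * real N + 1) / 12"
    using leaf_moment_2 by (simp add: leaf_moment_def)
  from \<open>N \<ge> 3\<close> obtain n where N: "N = Suc n" by (cases N) auto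
  have "measure_pmf.variance (rrh N) (\<lambda>H. real (numdeg 1 H)) = leaf_moment 2 N - (leaf_moment 1 N)\<^sup>2"
    unfolding N leaf_moment_def by (subst measure_pmf.variance_eq) simp_all
  also have "\<dots> = real N / 12"
    using \<open>N \<ge> 3\<close> by (simp only: leaf_moment_1 leaf_moment_2) (simp add: power2_eq_square field_simps)
  finally show "measure_pmf.variance (rrh N) (\<lambda>H. real (numdeg 1 H)) = real N / 12" .
qed

end
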